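(* Let $M$ be an odd prime, $p \in \mathbb{Z}_M^{\times}$, $q_1, q_2, q_3, q_4 \in \mathbb{Z}_M$, and let $K, C$ be positive integers with $\gcd(K, M) = 1$. Let $\varphi, \psi : \mathbb{Q} \to \mathbb{Z}$ satisfy $\varphi(x + C) = -\varphi(x)$ and $\psi(x + C) = -\psi(x)$ for all $x \in \frac{C}{K}\mathbb{Z}$. Identify each $x = \frac{j}{K}$ ($j \in \mathbb{Z}$) with $\bar{x} := jK^{-1} \in \mathbb{Z}_M$, and let $x \mapsto p^x$ be an assignment $\frac{1}{K}\mathbb{Z} \to \mathbb{Z}_M$ with $p^{x+a} = p^x p^a$ for all $x \in \frac1K\mathbb{Z}$ and integers $a \ge 0$. For $x \in \frac{1}{K}\mathbb{Z}$ with $\bar{x} \ne 0$ and $a, b \in \mathbb{Z}_M$ set \[ s_M(x; a, b) := \big(p^x + a\,\varphi(Cx) + b\,\psi(Cx)\big)\cdot \bar{x}^{-1} \in \mathbb{Z}_M . \] Let $t \in \frac{1}{K}\mathbb{Z}$ and nonnegative integers $u, v$ be such that $\bar t,\ \overline{t+2v+1},\ \overline{t+2u},\ \overline{t+2u+2v+1}$ are all nonzero in $\mathbb{Z}_M$, and put \[ s_0 = s_M(t; q_1,q_2),\ s_1 = s_M(t+2v+1; q_1,q_2),\ s_2 = s_M(t+2u; q_3,q_4),\ s_3 = s_M(t+2u+2v+1; q_3,q_4). \] Assume $2(s_1 p^{2u} - s_3) \not\equiv 0 \pmod M$. For $s^* \in \mathbb{Z}_M$ with $s_1 p^{2u} -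 s^* \ne 0$ define \[ v^*(s^* ) := \frac{ -s_0 p^{2u} \bar t - s_1 p^{2u}(\bar t+1) + s_2(\bar t+2u) + s^*(\bar t+2u+1) }{ 2(s_1 p^{2u} - s^* ) } \in \mathbb{Z}_M . \] Then $s_3$ is the only element $s^* \in \mathbb{Z}_M$ (with $s_1 p^{2u} - s^* \neq 0$) such that $v^*(s^* ) \equiv v \pmod M$.
   Context: All arithmetic is in $\mathbb{Z}_M$; $K^{-1}$ denotes the inverse of $K$ modulo $M$. The values $s_0,\dots,s_3$ are the evaluations used in the paper's symmetric invariant-based protocol (with $t$ a hidden evaluation index and $u,v$ session parameters), and $v^*(s^* )$ is the receiver's recovery formula for $v$ from a candidate third evaluation $s^*$. *)

theory Defs
  imports Main "HOL-Number_Theory.Number_Theory"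
begin

text \<open>Elements of Z_M are represented by integers (canonically in 0..M-1);
  x in (1/K)Z is a rational number, and its image in Z_M is x*K * K^{-1} mod M.\<close>

definition xbar :: "int \<Rightarrow> int \<Rightarrow> rat \<Rightarrow> int" where
  "xbar M K x = (\<lfloor>x * of_int K\<rfloor> * modular_inverse M K) mod M"

definition sM :: "int \<Rightarrow> int \<Rightarrow> int \<Rightarrow> (rat \<Rightarrow> int) \<Rightarrow> (rat \<Rightarrow> int) \<Rightarrow> (rat \<Rightarrow> int)
                  \<Rightarrow> int \<Rightarrow> int \<Rightarrow> rat \<Rightarrow> int" where
  "sM M K C P phi psi a b x =
     ((P x + a * phi (of_int C * x) + b * psi (of_int C * x)) * modular_inverse M (xbar M K x)) mod M"

definition vstar :: "int \<Rightarrow> int \<Rightarrow> nat \<Rightarrow> int \<Rightarrow> int \<Rightarrow> int \<Rightarrow> int \<Rightarrow> int \<Rightarrow> int" where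
  "vstar M p u tb s0 s1 s2 sstar =
     ((- s0 * p ^ (2*u) * tb - s1 * p ^ (2*u) * (tb + 1) + s2 * (tb + 2 * int u)
        + sstar * (tb + 2 * int u + 1))
      * modular_inverse M (2 * (s1 * p ^ (2*u) - sstar))) mod M"

end

theory Submission
  imports Defs
begin

text \<open>Let \<open>n\<^sub>k\<close> be the offset of the \<open>k\<close>-th evaluation point from \<open>t\<close>.  Since
  \<open>\<phi>\<close> and \<open>\<psi>\<close> are antiperiodic with period \<open>C\<close>, each evaluation satisfies
  \<open>s\<^sub>k (t + n\<^sub>k) \<equiv> p\<^sup>t p\<^bsup>n\<^sub>k\<^esup> + (-1)\<^bsup>n\<^sub>k\<^esup> Q\<close>, where the noise \<open>Q\<close> at \<open>t\<close> is shared by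
  \<open>s\<^sub>0, s\<^sub>1\<close> and by \<open>s\<^sub>2, s\<^sub>3\<close>.  In the numerator of \<open>v\<^sup>*(s)\<close> minus \<open>v\<close> times its
  denominator the \<open>p\<^sup>t\<close>-terms cancel across the two pairs and the noise cancels within
  each pair (offsets of opposite parity), leaving \<open>(s - s\<^sub>3)(t + 2u + 2v + 1)\<close>.  As
  \<open>t + 2u + 2v + 1\<close> is a unit, \<open>v\<^sup>*(s) \<equiv> v\<close> holds exactly when \<open>s \<equiv> s\<^sub>3\<close>.\<close>

lemma coprime_if_not_cong_0:
  fixes M a :: int
  assumes "prime M" "\<not> [a = 0] (mod M)"
  shows "coprime a M"
  using prime_imp_coprime[OF assms(1), of a] assms(2) by (simp add: cong_0_iff coprime_commute)

lemma cong_mult_modular_inverse_mod_iff: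
  fixes M D N v :: int
  assumes "coprime D M"
  shows "[N * modular_inverse M D mod M = v] (mod M) \<longleftrightarrow> [N = v * D] (mod M)"
proof -
  have "[N * modular_inverse M D * D = N * 1] (mod M)"
    unfolding mult.assoc by (intro cong_scalar_left cong_modular_inverse2) (use assms in simp)
  then have "[N * modular_inverse M D * D = v * D] (mod M) \<longleftrightarrow> [N = v * D] (mod M)"
    by (metis cong_sym cong_trans mult_1_right)
  then show ?thesis
    using cong_mult_rcancel[OF assms] by simp
qed

lemma sM_mult_xbar_cong:
  assumes "coprime (xbar M K x) M"
  shows "[sM M K C P phi psi a b x * xbar M K x
          = P x + a * phi (of_int C * x) + b * psi (of_int C * x)] (mod M)"
  using cong_mult_modular_inverse_mod_iff[OF assms,
      of "P x + a * phi (of_int C * x) + b * psi (of_int C * x)" "sM M K C P phi psi a b x"]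
  by (simp add: sM_def cong_sym_eq)

lemma xbar_add_of_nat_cong:
  assumes "K \<noteq> 0" "coprime K M" and x: "\<exists>j::int. x = of_int j / of_int K"
  shows "[xbar M K (x + of_nat n) = xbar M K x + int n] (mod M)"
proof -
  obtain j where j: "x = of_int j / of_int K" using x by blast
  define I where "I = modular_inverse M K"
  have "(x + of_nat n) * of_int K = of_int (j + int n * K)"
    using assms(1) by (simp add: j field_simps)
  then have floor_shift: "\<lfloor>(x + of_nat n) * of_int K\<rfloor> = j + int n * K"
    by (metis floor_of_int)
  have floor_x: "\<lfloor>x * of_int K\<rfloor> = j"
    using assms(1) by (simp add: j)
  have "[K * I = 1] (mod M)"
    unfolding I_def using assms(2) by (intro cong_modular_inverse1) (simp add: coprime_commute)
  then have "[j * I + int n * (K * I) = j * I + int n * 1] (mod M)"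
    by (intro cong_add cong_scalar_left cong_refl)
  then have "[(j + int n * K) * I = j * I + int n] (mod M)"
    by (simp add: algebra_simps)
  moreover have "[j * I + int n = j * I mod M + int n] (mod M)"
    by (intro cong_add cong_refl) (simp add: cong_def)
  ultimately show ?thesis
    unfolding xbar_def floor_shift floor_x I_def[symmetric] cong_mod_left by (rule cong_trans)
qed

lemma antiperiodic_add_of_nat:
  fixes f :: "rat \<Rightarrow> int"
  assumes "K \<noteq> 0"
    and anti: "\<And>x. (\<exists>j::int. x = of_int C * of_int j / of_int K) \<Longrightarrow> f (x + of_int C) = - f x"
    and x: "\<exists>j::int. x = of_int j / of_int K"
  shows "f (of_int C * (x + of_nat n)) = (-1) ^ n * f (of_int C * x)"
proof (induction n)
  case 0
  then show ?case by simp
next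
  case (Suc n)
  obtain j where j: "x = of_int j / of_int K" using x by blast
  have "of_int C * (x + of_nat n) = of_int C * of_int (j + int n * K) / (of_int K :: rat)"
    using assms(1) by (simp add: j field_simps)
  then have "f (of_int C * (x + of_nat n) + of_int C) = - f (of_int C * (x + of_nat n))"
    by (intro anti) blast
  then show ?case
    using Suc by (simp add: algebra_simps)
qed

lemma sM_add_of_nat_cong:
  fixes P phi psi :: "rat \<Rightarrow> int"
  assumes "K \<noteq> 0" "coprime K M" and x: "\<exists>j::int. x = of_int j / of_int K"
    and phi_anti: "\<And>x. (\<exists>j::int. x = of_int C * of_int j / of_int K) \<Longrightarrow> phi (x + of_int C) = - phi x"
    and psi_anti: "\<And>x. (\<exists>j::int. x = of_int C * of_int j / of_int K) \<Longrightarrow> psi (x + of_int C) = - psi x"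
    and P_shift: "[P (x + of_nat n) = P x * p ^ n] (mod M)"
    and unit: "coprime (xbar M K (x + of_nat n)) M"
  shows "[sM M K C P phi psi a b (x + of_nat n) * (xbar M K x + int n)
          = P x * p ^ n + (-1) ^ n * (a * phi (of_int C * x) + b * psi (of_int C * x))] (mod M)"
proof -
  let ?s = "sM M K C P phi psi a b (x + of_nat n)"
  let ?noise = "\<lambda>y. a * phi (of_int C * y) + b * psi (of_int C * y)"
  have "[?s * (xbar M K x + int n) = ?s * xbar M K (x + of_nat n)] (mod M)"
    using xbar_add_of_nat_cong[OF assms(1-3)] by (intro cong_scalar_left) (rule cong_sym)
  also have "[?s * xbar M K (x + of_nat n) = P (x + of_nat n) + ?noise (x + of_nat n)] (mod M)"
    using sM_mult_xbar_cong[OF unit] by (simp add: add.assoc)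
  also have "[P (x + of_nat n) + ?noise (x + of_nat n) = P x * p ^ n + ?noise (x + of_nat n)] (mod M)"
    by (intro cong_add cong_refl P_shift)
  also have "[P x * p ^ n + ?noise (x + of_nat n) = P x * p ^ n + (-1) ^ n * ?noise x] (mod M)"
    using antiperiodic_add_of_nat[where f = phi, OF assms(1) phi_anti x]
      antiperiodic_add_of_nat[where f = psi, OF assms(1) psi_anti x]
    by (simp add: algebra_simps)
  finally show ?thesis .
qed

lemma recovery_numerator_cong:
  fixes M T X Q Q' p s0 s1 s2 s3 s :: int and u v :: nat
  assumes "[s0 * T = X + Q] (mod M)"
    and "[s1 * (T + int (2*v+1)) = X * p ^ (2*v+1) - Q] (mod M)"
    and "[s2 * (T + int (2*u)) = X * p ^ (2*u) + Q'] (mod M)"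
    and "[s3 * (T + int (2*u+2*v+1)) = X * p ^ (2*u+2*v+1) - Q'] (mod M)"
  shows "[- s0 * p ^ (2*u) * T - s1 * p ^ (2*u) * (T + 1) + s2 * (T + 2 * int u) + s * (T + 2 * int u + 1)
          = int v * (2 * (s1 * p ^ (2*u) - s)) + (s - s3) * (T + int (2*u+2*v+1))] (mod M)"
proof -
  let ?E = "s2 * (T + int (2*u)) + s3 * (T + int (2*u+2*v+1))
            - p ^ (2*u) * (s0 * T + s1 * (T + int (2*v+1)))"
  have "[?E = (X * p ^ (2*u) + Q') + (X * p ^ (2*u+2*v+1) - Q')
              - p ^ (2*u) * ((X + Q) + (X * p ^ (2*v+1) - Q))] (mod M)"
    by (intro cong_add cong_diff cong_scalar_left assms)
  also have "(X * p ^ (2*u) + Q') + (X * p ^ (2*u+2*v+1) - Q')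
              - p ^ (2*u) * ((X + Q) + (X * p ^ (2*v+1) - Q)) = 0"
    by (simp add: power_add algebra_simps)
  finally have "[int v * (2 * (s1 * p ^ (2*u) - s)) + (s - s3) * (T + int (2*u+2*v+1)) + ?E
      = int v * (2 * (s1 * p ^ (2*u) - s)) + (s - s3) * (T + int (2*u+2*v+1)) + 0] (mod M)"
    by (intro cong_add cong_refl)
  then show ?thesis
    by (simp add: algebra_simps)
qed

lemma vstar_cong_iff:
  fixes M T X Q Q' p s0 s1 s2 s3 s :: int and u v :: nat
  assumes "[s0 * T = X + Q] (mod M)"
    and "[s1 * (T + int (2*v+1)) = X * p ^ (2*v+1) - Q] (mod M)"
    and "[s2 * (T + int (2*u)) = X * p ^ (2*u) + Q'] (mod M)"
    and "[s3 * (T + int (2*u+2*v+1)) = X * p ^ (2*u+2*v+1) - Q'] (mod M)"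
    and denominator_unit: "coprime (2 * (s1 * p ^ (2*u) - s)) M"
    and last_point_unit: "coprime (T + int (2*u+2*v+1)) M"
  shows "[vstar M p u T s0 s1 s2 s = int v] (mod M) \<longleftrightarrow> [s = s3] (mod M)"
proof -
  let ?W = "T + int (2*u+2*v+1)"
  have "[vstar M p u T s0 s1 s2 s = int v] (mod M)
        \<longleftrightarrow> [int v * (2 * (s1 * p ^ (2*u) - s)) + (s - s3) * ?W
              = int v * (2 * (s1 * p ^ (2*u) - s))] (mod M)"
    unfolding vstar_def cong_mult_modular_inverse_mod_iff[OF denominator_unit]
    using cong_trans[OF cong_sym[OF recovery_numerator_cong[OF assms(1-4)]]]
      cong_trans[OF recovery_numerator_cong[OF assms(1-4)]] by blast
  also have "\<dots> \<longleftrightarrow> [(s - s3) * ?W = 0 * ?W] (mod M)"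
    by (simp add: cong_add_lcancel_0)
  also have "\<dots> \<longleftrightarrow> [s - s3 = 0] (mod M)"
    by (rule cong_mult_rcancel[OF last_point_unit])
  also have "\<dots> \<longleftrightarrow> [s = s3] (mod M)"
    by (simp add: cong_0_iff cong_iff_dvd_diff)
  finally show ?thesis .
qed

theorem lemma1:
  fixes M K C p q1 q2 q3 q4 :: int
    and phi psi P :: "rat \<Rightarrow> int"
    and t :: rat and u v :: nat
  assumes M_prime: "prime M" and M_odd: "odd M"
    and p_unit: "coprime p M"
    and K_pos: "K > 0" and C_pos: "C > 0" and K_coprime: "gcd K M = 1"
    and phi_anti: "\<And>x. (\<exists>j::int. x = of_int C * of_int j / of_int K) \<Longrightarrow> phi (x + of_int C) = - phi x"
    and psi_anti: "\<And>x. (\<exists>j::int. x = of_int C * of_int j / of_int K) \<Longrightarrow> psi (x + of_int C) = - psi x"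
    and P_mult: "\<And>x (a::nat). (\<exists>j::int. x = of_int j / of_int K) \<Longrightarrow> [P (x + of_nat a) = P x * p ^ a] (mod M)"
    and t_grid: "\<exists>j::int. t = of_int j / of_int K"
    and nz0: "\<not> [xbar M K t = 0] (mod M)"
    and nz1: "\<not> [xbar M K (t + of_nat (2*v+1)) = 0] (mod M)"
    and nz2: "\<not> [xbar M K (t + of_nat (2*u)) = 0] (mod M)"
    and nz3: "\<not> [xbar M K (t + of_nat (2*u+2*v+1)) = 0] (mod M)"
    and s3_cond: "\<not> [2 * (sM M K C P phi psi q1 q2 (t + of_nat (2*v+1)) * p ^ (2*u)
                            - sM M K C P phi psi q3 q4 (t + of_nat (2*u+2*v+1))) = 0] (mod M)"
  shows "{s \<in> {0..<M}.
            \<not> [sM M K C P phi psi q1 q2 (t + of_nat (2*v+1)) * p ^ (2*u) = s] (mod M) \<and>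
            [vstar M p u (xbar M K t)
               (sM M K C P phi psi q1 q2 t)
               (sM M K C P phi psi q1 q2 (t + of_nat (2*v+1)))
               (sM M K C P phi psi q3 q4 (t + of_nat (2*u)))
               s = int v] (mod M)}
         = {sM M K C P phi psi q3 q4 (t + of_nat (2*u+2*v+1))}"
proof -
  \<comment> \<open>The argument never divides by \<open>p\<close> and never uses the sign of \<open>C\<close>.\<close>
  let ?T = "xbar M K t" and ?X = "P t"
  let ?Q = "q1 * phi (of_int C * t) + q2 * psi (of_int C * t)"
  let ?Q' = "q3 * phi (of_int C * t) + q4 * psi (of_int C * t)"
  let ?s = "\<lambda>a b n. sM M K C P phi psi a b (t + of_nat n)"
  let ?S = "?s q1 q2 (2*v+1) * p ^ (2*u)" and ?s3 = "?s q3 q4 (2*u+2*v+1)"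
  have K_unit: "coprime K M"
    using K_coprime by (simp add: coprime_iff_gcd_eq_1)
  have eval: "[?s a b n * (?T + int n)
      = ?X * p ^ n + (-1) ^ n * (a * phi (of_int C * t) + b * psi (of_int C * t))] (mod M)"
    if "\<not> [xbar M K (t + of_nat n) = 0] (mod M)" for a b n
    using K_pos coprime_if_not_cong_0[OF M_prime that]
    by (intro sM_add_of_nat_cong[where phi = phi and psi = psi,
          OF _ K_unit t_grid phi_anti psi_anti P_mult[OF t_grid]]) auto
  have recover: "[vstar M p u ?T (?s q1 q2 0) (?s q1 q2 (2*v+1)) (?s q3 q4 (2*u)) s = int v] (mod M)
      \<longleftrightarrow> [s = ?s3] (mod M)" if "\<not> [?S = s] (mod M)" for s
  proof (rule vstar_cong_iff)
    show "[?s q1 q2 0 * ?T = ?X + ?Q] (mod M)"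
      using eval[where a = q1 and b = q2 and n = 0] nz0 by simp
    show "[?s q1 q2 (2*v+1) * (?T + int (2*v+1)) = ?X * p ^ (2*v+1) - ?Q] (mod M)"
      using eval[where a = q1 and b = q2, OF nz1] by (simp add: algebra_simps)
    show "[?s q3 q4 (2*u) * (?T + int (2*u)) = ?X * p ^ (2*u) + ?Q'] (mod M)"
      using eval[where a = q3 and b = q4, OF nz2] by simp
    show "[?s3 * (?T + int (2*u+2*v+1)) = ?X * p ^ (2*u+2*v+1) - ?Q'] (mod M)"
      using eval[where a = q3 and b = q4, OF nz3] by (simp add: algebra_simps)
    have "coprime (?S - s) M"
      using that by (intro coprime_if_not_cong_0[OF M_prime]) (simp add: cong_iff_dvd_diff cong_0_iff)
    then show "coprime (2 * (?S - s)) M"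
      using M_odd by (metis coprime_mult_left_iff coprime_left_2_iff_odd)
    have "[xbar M K (t + of_nat (2*u+2*v+1)) = ?T + int (2*u+2*v+1)] (mod M)"
      using K_pos by (intro xbar_add_of_nat_cong K_unit t_grid) simp
    then show "coprime (?T + int (2*u+2*v+1)) M"
      using nz3 coprime_if_not_cong_0[OF M_prime] by (metis cong_trans)
  qed
  have s3_residue: "?s3 \<in> {0..<M}"
    using prime_gt_1_int[OF M_prime] by (simp add: sM_def)
  have s3_admissible: "\<not> [?S = ?s3] (mod M)"
    using s3_cond by (metis cong_iff_dvd_diff cong_0_iff dvd_mult)
  show ?thesis
    using recover s3_admissible s3_residue by (auto intro: cong_less_imp_eq_int)
qed

end
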